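(* The class of trivial extensions is Morita invariant: if $A/B$ is a trivial extension and $A/B$ is Morita equivalent to $A'/B'$, then $A'/B'$ is a trivial extension.
   Context: All rings have identity, subrings contain the identity, modules are unital; a ring extension $A/B$ means $B$ is a subring of $A$. $A/B$ is a trivial extension if there is a $B$-$B$-bimodule $S$ with $A=B\oplus S$ and multiplication $(b,s)(c,t)=(bc,bt+sc)$. For bimodules ${}_AX_{A'}$, ${}_AY_{A'}$, write $X\mid Y$ if $X$ is isomorphic to a direct summand of a finite direct sum of copies of $Y$, and $X\sim Y$ if $X\mid Y$ and $Y\mid X$. $\mathrm{End}^r({}_AM)$ denotes the ring of left $A$-endomorphisms of $M$ acting on the right. A bimodule ${}_AM_{A'}$ is a Morita module if ${}_AM\sim{}_AA$ and $\mathrm{End}^r({}_AM)=A'$. Ring extensions $A/B$ and $A'/B'$ are Morita equivalent if there exist Morita modules ${}_AM_{A'}$ and ${}_BN_{B'}$ with ${}_AA\otimes_BN_{B'}\cong{}_AM_{B'}$. A class $\mathscr C$ of ring extensions is Morita invariant if whenever $A/B\in\mathscr C$ and $A/B$ is Morita equivalent to $A'/B'$, then $A'/B'\in\mathscr C$. *)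

theory Defs
  imports Main "HOL-Library.Poly_Mapping"
begin

text \<open>Rings are types of class ring_1 (the whole type is the ring);
  a ring extension A/B is a type 'a :: ring_1 (= A) together with a subring B :: 'a set.\<close>

definition subring_of :: "'a::ring_1 set \<Rightarrow> bool" where
  "subring_of B \<longleftrightarrow> 0 \<in> B \<and> 1 \<in> B \<and>
     (\<forall>x\<in>B. \<forall>y\<in>B. x + y \<in> B \<and> x * y \<in> B) \<and> (\<forall>x\<in>B. - x \<in> B)"

definition add_subgroup :: "'m::ab_group_add set \<Rightarrow> bool" where
  "add_subgroup C \<longleftrightarrow> 0 \<in> C \<and> (\<forall>x\<in>C. \<forall>y\<in>C. x + y \<in> C) \<and> (\<forall>x\<in>C. - x \<in> C)"

definition lmod :: "'r::ring_1 set \<Rightarrow> 'm::ab_group_add set \<Rightarrow> ('r \<Rightarrow> 'm \<Rightarrow> 'm) \<Rightarrow> bool" where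
  "lmod R C l \<longleftrightarrow> add_subgroup C \<and>
     (\<forall>r\<in>R. \<forall>x\<in>C. l r x \<in> C) \<and>
     (\<forall>r\<in>R. \<forall>x\<in>C. \<forall>y\<in>C. l r (x + y) = l r x + l r y) \<and>
     (\<forall>r\<in>R. \<forall>s\<in>R. \<forall>x\<in>C. l (r + s) x = l r x + l s x) \<and>
     (\<forall>r\<in>R. \<forall>s\<in>R. \<forall>x\<in>C. l (r * s) x = l r (l s x)) \<and>
     (\<forall>x\<in>C. l 1 x = x)"

definition rmod :: "'s::ring_1 set \<Rightarrow> 'm::ab_group_add set \<Rightarrow> ('m \<Rightarrow> 's \<Rightarrow> 'm) \<Rightarrow> bool" where
  "rmod S C rr \<longleftrightarrow> add_subgroup C \<and>
     (\<forall>r\<in>S. \<forall>x\<in>C. rr x r \<in> C) \<and>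
     (\<forall>r\<in>S. \<forall>x\<in>C. \<forall>y\<in>C. rr (x + y) r = rr x r + rr y r) \<and>
     (\<forall>r\<in>S. \<forall>s\<in>S. \<forall>x\<in>C. rr x (r + s) = rr x r + rr x s) \<and>
     (\<forall>r\<in>S. \<forall>s\<in>S. \<forall>x\<in>C. rr x (r * s) = rr (rr x r) s) \<and>
     (\<forall>x\<in>C. rr x 1 = x)"

definition bimod :: "'r::ring_1 set \<Rightarrow> 's::ring_1 set \<Rightarrow> 'm::ab_group_add set \<Rightarrow>
    ('r \<Rightarrow> 'm \<Rightarrow> 'm) \<Rightarrow> ('m \<Rightarrow> 's \<Rightarrow> 'm) \<Rightarrow> bool" where
  "bimod R S C l rr \<longleftrightarrow> lmod R C l \<and> rmod S C rr \<and>
     (\<forall>a\<in>R. \<forall>b\<in>S. \<forall>x\<in>C. l a (rr x b) = rr (l a x) b)"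

definition llin :: "'r::ring_1 set \<Rightarrow> 'm::ab_group_add set \<Rightarrow> ('r \<Rightarrow> 'm \<Rightarrow> 'm) \<Rightarrow>
    'n::ab_group_add set \<Rightarrow> ('r \<Rightarrow> 'n \<Rightarrow> 'n) \<Rightarrow> ('m \<Rightarrow> 'n) \<Rightarrow> bool" where
  "llin R C l D l' f \<longleftrightarrow> (\<forall>x\<in>C. f x \<in> D) \<and>
     (\<forall>x\<in>C. \<forall>y\<in>C. f (x + y) = f x + f y) \<and>
     (\<forall>a\<in>R. \<forall>x\<in>C. f (l a x) = l' a (f x))"

text \<open>X | Y for left R-modules: X is isomorphic to a direct summand of Y^n for some n,
  i.e. there are module maps i : X \<rightarrow> Y^n (components f k) and p : Y^n \<rightarrow> X
  (p = sum of components g k) with p \<circ> i = id.\<close>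
definition ldvd :: "'r::ring_1 set \<Rightarrow> 'm::ab_group_add set \<Rightarrow> ('r \<Rightarrow> 'm \<Rightarrow> 'm) \<Rightarrow>
    'n::ab_group_add set \<Rightarrow> ('r \<Rightarrow> 'n \<Rightarrow> 'n) \<Rightarrow> bool" where
  "ldvd R C l D l' \<longleftrightarrow> (\<exists>(n::nat) f g.
     (\<forall>k<n. llin R C l D l' (f k) \<and> llin R D l' C l (g k)) \<and>
     (\<forall>x\<in>C. (\<Sum>k<n. g k (f k x)) = x))"

definition lsim :: "'r::ring_1 set \<Rightarrow> 'm::ab_group_add set \<Rightarrow> ('r \<Rightarrow> 'm \<Rightarrow> 'm) \<Rightarrow>
    'n::ab_group_add set \<Rightarrow> ('r \<Rightarrow> 'n \<Rightarrow> 'n) \<Rightarrow> bool" where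
  "lsim R C l D l' \<longleftrightarrow> ldvd R C l D l' \<and> ldvd R D l' C l"

text \<open>Morita module {}_R M_{R'}: bimodule with {}_R M \<sim> {}_R R and End^r({}_R M) = R',
  i.e. every left R-endomorphism of M is right multiplication by a unique element of R'.\<close>
definition morita_module :: "'r::ring_1 set \<Rightarrow> 's::ring_1 set \<Rightarrow> 'm::ab_group_add set \<Rightarrow>
    ('r \<Rightarrow> 'm \<Rightarrow> 'm) \<Rightarrow> ('m \<Rightarrow> 's \<Rightarrow> 'm) \<Rightarrow> bool" where
  "morita_module R R' C l rr \<longleftrightarrow> bimod R R' C l rr \<and>
     lsim R C l R (\<lambda>a x. a * x) \<and>
     (\<forall>f. llin R C l C l f \<longrightarrow> (\<exists>!a'. a' \<in> R' \<and> (\<forall>x\<in>C. f x = rr x a')))"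

definition zsc :: "int \<Rightarrow> 'm::ab_group_add \<Rightarrow> 'm" where
  "zsc k x = (if 0 \<le> k then (\<Sum>i<nat k. x) else - (\<Sum>i<nat (- k). x))"

text \<open>The subgroup of the free abelian group on A \<times> N generated by the defining
  relations of the tensor product A \<otimes>_B N.\<close>
inductive_set tensor_rels :: "'a::ring_1 set \<Rightarrow> 'n::ab_group_add set \<Rightarrow> ('a \<Rightarrow> 'n \<Rightarrow> 'n)
    \<Rightarrow> (('a \<times> 'n) \<Rightarrow>\<^sub>0 int) set" for B CN lN where
  zero: "0 \<in> tensor_rels B CN lN"
| add: "c \<in> tensor_rels B CN lN \<Longrightarrow> d \<in> tensor_rels B CN lN \<Longrightarrow> c + d \<in> tensor_rels B CN lN"
| neg: "c \<in> tensor_rels B CN lN \<Longrightarrow> - c \<in> tensor_rels B CN lN"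
| rel1: "n \<in> CN \<Longrightarrow> Poly_Mapping.single (x + y, n) 1 - Poly_Mapping.single (x, n) 1
          - Poly_Mapping.single (y, n) 1 \<in> tensor_rels B CN lN"
| rel2: "n \<in> CN \<Longrightarrow> n' \<in> CN \<Longrightarrow> Poly_Mapping.single (x, n + n') 1 - Poly_Mapping.single (x, n) 1
          - Poly_Mapping.single (x, n') 1 \<in> tensor_rels B CN lN"
| rel3: "b \<in> B \<Longrightarrow> n \<in> CN \<Longrightarrow> Poly_Mapping.single (x * b, n) 1
          - Poly_Mapping.single (x, lN b n) 1 \<in> tensor_rels B CN lN"

definition tensor_ind :: "('a \<Rightarrow> 'n \<Rightarrow> 'm::ab_group_add) \<Rightarrow> (('a \<times> 'n) \<Rightarrow>\<^sub>0 int) \<Rightarrow> 'm" where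
  "tensor_ind \<phi> c = (\<Sum>p\<in>Poly_Mapping.keys c. zsc (Poly_Mapping.lookup c p) (\<phi> (fst p) (snd p)))"

text \<open>{}_A A \<otimes>_B N_{B'} \<cong> {}_A M_{B'} as A-B'-bimodules (A = UNIV :: 'a set):
  there is a map \<phi>(x,n) = image of x \<otimes> n, compatible with the A- and B'-actions, whose
  induced map from the free abelian group on A \<times> N is onto M with kernel exactly
  the tensor relations.\<close>
definition tensor_iso :: "'a::ring_1 set \<Rightarrow> 'n::ab_group_add set \<Rightarrow> ('a \<Rightarrow> 'n \<Rightarrow> 'n) \<Rightarrow>
    ('n \<Rightarrow> 'c::ring_1 \<Rightarrow> 'n) \<Rightarrow> 'c set \<Rightarrow>
    'm::ab_group_add set \<Rightarrow> ('a \<Rightarrow> 'm \<Rightarrow> 'm) \<Rightarrow> ('m \<Rightarrow> 'c \<Rightarrow> 'm) \<Rightarrow> bool" where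
  "tensor_iso B CN lN rN B' CM lM rM \<longleftrightarrow> (\<exists>\<phi> :: 'a \<Rightarrow> 'n \<Rightarrow> 'm.
     (\<forall>x. \<forall>n\<in>CN. \<phi> x n \<in> CM) \<and>
     (\<forall>x y. \<forall>n\<in>CN. \<phi> (x + y) n = \<phi> x n + \<phi> y n) \<and>
     (\<forall>x. \<forall>n\<in>CN. \<forall>n'\<in>CN. \<phi> x (n + n') = \<phi> x n + \<phi> x n') \<and>
     (\<forall>x. \<forall>b\<in>B. \<forall>n\<in>CN. \<phi> (x * b) n = \<phi> x (lN b n)) \<and>
     (\<forall>a x. \<forall>n\<in>CN. \<phi> (a * x) n = lM a (\<phi> x n)) \<and>
     (\<forall>x. \<forall>n\<in>CN. \<forall>b'\<in>B'. \<phi> x (rN n b') = rM (\<phi> x n) b') \<and>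
     (\<forall>m\<in>CM. \<exists>c. Poly_Mapping.keys c \<subseteq> UNIV \<times> CN \<and> tensor_ind \<phi> c = m) \<and>
     (\<forall>c. Poly_Mapping.keys c \<subseteq> UNIV \<times> CN \<and> tensor_ind \<phi> c = 0 \<longrightarrow> c \<in> tensor_rels B CN lN))"

text \<open>Morita equivalence of ring extensions A/B (A = UNIV :: 'a set) and A'/B'
  (A' = UNIV :: 'c set) witnessed by Morita modules {}_A M_{A'} (carrier CM) and
  {}_B N_{B'} (carrier CN).\<close>
definition morita_equiv_via :: "'a::ring_1 set \<Rightarrow> 'c::ring_1 set \<Rightarrow>
    'm::ab_group_add set \<Rightarrow> ('a \<Rightarrow> 'm \<Rightarrow> 'm) \<Rightarrow> ('m \<Rightarrow> 'c \<Rightarrow> 'm) \<Rightarrow>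
    'n::ab_group_add set \<Rightarrow> ('a \<Rightarrow> 'n \<Rightarrow> 'n) \<Rightarrow> ('n \<Rightarrow> 'c \<Rightarrow> 'n) \<Rightarrow> bool" where
  "morita_equiv_via B B' CM lM rM CN lN rN \<longleftrightarrow>
     subring_of B \<and> subring_of B' \<and>
     morita_module (UNIV :: 'a set) (UNIV :: 'c set) CM lM rM \<and>
     morita_module B B' CN lN rN \<and>
     tensor_iso B CN lN rN B' CM lM rM"

text \<open>Trivial extension A/B (A = UNIV :: 'a set): A = B \<oplus> S for a B-B-sub-bimodule S
  of A with S S = 0, so that (b + s)(c + t) = bc + (bt + sc).\<close>
definition trivial_ext :: "'a::ring_1 set \<Rightarrow> bool" where
  "trivial_ext B \<longleftrightarrow> subring_of B \<and> (\<exists>S. add_subgroup S \<and>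
     (\<forall>b\<in>B. \<forall>s\<in>S. b * s \<in> S \<and> s * b \<in> S) \<and>
     (\<forall>s\<in>S. \<forall>t\<in>S. s * t = 0) \<and>
     B \<inter> S = {0} \<and> (\<forall>a. \<exists>b\<in>B. \<exists>s\<in>S. a = b + s))"

end

(*
  Write A = B \<oplus> S and let proj : A \<rightarrow> B be the projection along S; as S is an ideal with
  S S = 0, proj is multiplicative. Under M \<cong> A \<otimes>_B N the balanced map x \<otimes> n \<mapsto> proj(x) n
  induces an additive projection proj_N : M \<rightarrow> N with kernel S \<otimes>_B N, and the complement
  of B' is S' = {a' | M a' \<subseteq> ker proj_N}. For a' \<in> A' the map n \<mapsto> proj_N ((1 \<otimes> n) a') is a
  B-endomorphism of N, hence right multiplication by some b' \<in> B' = End(N), and a' - b' \<in> S'.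
  B' \<inter> S' = 0 since proj_N ((1 \<otimes> n) b') = n b' and N is faithful over B'. As S annihilates
  ker proj_N, elements of S' act on M only through B \<otimes>_B N, so M S' S' = 0, and S' S' = 0
  because M is faithful over A'.
*)

theory Submission
  imports Defs
begin

lemma zsc_succ: "zsc (k + 1) x = zsc k x + x"
proof (cases "k \<ge> 0")
  case True
  then have "nat (k + 1) = Suc (nat k)" by simp
  with True show ?thesis by (simp add: zsc_def)
next
  case False
  show ?thesis
  proof (cases "k = -1")
    case True
    then show ?thesis by (simp add: zsc_def)
  next
    case k: False
    with \<open>\<not> k \<ge> 0\<close> have "nat (- k) = Suc (nat (- (k + 1)))" by simp
    with \<open>\<not> k \<ge> 0\<close> k show ?thesis by (simp add: zsc_def)
  qed
qed

lemma zsc_add: "zsc (k + l) x = zsc k x + zsc l x"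
proof (induction l rule: int_induct[where k = 0])
  case base
  then show ?case by (simp add: zsc_def)
next
  case (step1 i)
  then show ?case using zsc_succ[of "k + i" x] zsc_succ[of i x] by (simp add: add.assoc)
next
  case (step2 i)
  then show ?case using zsc_succ[of "k + (i - 1)" x] zsc_succ[of "i - 1" x] by (simp add: algebra_simps)
qed

lemma zsc_minus: "zsc (- k) x = - zsc k x"
  using zsc_add[of k "- k" x] by (simp add: zsc_def eq_neg_iff_add_eq_0 add.commute)

lemma tensor_ind_eq_sum_superset:
  assumes "finite K" "Poly_Mapping.keys c \<subseteq> K"
  shows "tensor_ind \<phi> c = (\<Sum>p\<in>K. zsc (Poly_Mapping.lookup c p) (\<phi> (fst p) (snd p)))"
  unfolding tensor_ind_def
  by (rule sum.mono_neutral_left) (use assms in \<open>auto simp: in_keys_iff zsc_def\<close>)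

lemma tensor_ind_zero [simp]: "tensor_ind \<phi> 0 = 0"
  by (simp add: tensor_ind_def)

lemma tensor_ind_frag_of [simp]: "tensor_ind \<phi> (frag_of p) = \<phi> (fst p) (snd p)"
  by (simp add: tensor_ind_def zsc_def)

lemma tensor_ind_add: "tensor_ind \<phi> (c + d) = tensor_ind \<phi> c + tensor_ind \<phi> d"
proof -
  let ?K = "Poly_Mapping.keys c \<union> Poly_Mapping.keys d"
  let ?t = "\<lambda>e p. zsc (Poly_Mapping.lookup e p) (\<phi> (fst p) (snd p))"
  have "tensor_ind \<phi> (c + d) = (\<Sum>p\<in>?K. ?t (c + d) p)"
    by (rule tensor_ind_eq_sum_superset) (use keys_add[of c d] in auto)
  also have "\<dots> = (\<Sum>p\<in>?K. ?t c p) + (\<Sum>p\<in>?K. ?t d p)"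
    by (simp add: lookup_add zsc_add sum.distrib)
  also have "\<dots> = tensor_ind \<phi> c + tensor_ind \<phi> d"
    using tensor_ind_eq_sum_superset[of ?K c \<phi>] tensor_ind_eq_sum_superset[of ?K d \<phi>] by simp
  finally show ?thesis .
qed

lemma tensor_ind_minus: "tensor_ind \<phi> (- c) = - tensor_ind \<phi> c"
  by (simp add: tensor_ind_def zsc_minus sum_negf)

lemma tensor_ind_diff: "tensor_ind \<phi> (c - d) = tensor_ind \<phi> c - tensor_ind \<phi> d"
  by (simp only: diff_conv_add_uminus tensor_ind_add tensor_ind_minus)

definition additive_on :: "'m::ab_group_add set \<Rightarrow> ('m \<Rightarrow> 'k::ab_group_add) \<Rightarrow> bool" where
  "additive_on C f \<longleftrightarrow> (\<forall>x\<in>C. \<forall>y\<in>C. f (x + y) = f x + f y)"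

lemma add_subgroup_diff: "add_subgroup C \<Longrightarrow> x \<in> C \<Longrightarrow> y \<in> C \<Longrightarrow> x - y \<in> C"
  unfolding add_subgroup_def by (metis diff_conv_add_uminus)

lemma additive_on_diff:
  assumes "add_subgroup C" "additive_on C f" "x \<in> C" "y \<in> C"
  shows "f (x - y) = f x - f y"
  using assms add_subgroup_diff[OF assms(1,3,4)] unfolding additive_on_def
  by (metis add_diff_cancel diff_add_cancel)

lemma additive_on_zero: "add_subgroup C \<Longrightarrow> additive_on C f \<Longrightarrow> f 0 = 0"
  using additive_on_diff[of C f 0 0] by (simp add: add_subgroup_def)

lemma tensor_ind_closed:
  assumes "add_subgroup C" "Poly_Mapping.keys c \<subseteq> K" "\<And>x n. (x, n) \<in> K \<Longrightarrow> \<phi> x n \<in> C"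
  shows "tensor_ind \<phi> c \<in> C"
  using assms(2)
  by (induction c rule: frag_induction)
    (use assms in \<open>auto simp: tensor_ind_diff add_subgroup_diff add_subgroup_def\<close>)

lemma tensor_ind_additive_ext:
  assumes "add_subgroup C" "additive_on C f" "additive_on C g" "Poly_Mapping.keys c \<subseteq> K"
    and "\<And>x n. (x, n) \<in> K \<Longrightarrow> \<phi> x n \<in> C \<and> f (\<phi> x n) = g (\<phi> x n)"
  shows "f (tensor_ind \<phi> c) = g (tensor_ind \<phi> c)"
proof -
  have "tensor_ind \<phi> c \<in> C \<and> f (tensor_ind \<phi> c) = g (tensor_ind \<phi> c)"
    using assms(4)
  proof (induction c rule: frag_induction)
    case zero
    then show ?case
      using assms(1) additive_on_zero[OF assms(1,2)] additive_on_zero[OF assms(1,3)]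
      by (simp add: add_subgroup_def)
  next
    case (one p)
    then show ?case using assms(5)[of "fst p" "snd p"] by simp
  next
    case (diff a b)
    then show ?case
      using assms(1-3) by (simp add: tensor_ind_diff add_subgroup_diff additive_on_diff)
  qed
  then show ?thesis ..
qed

definition balanced_map :: "'a::ring_1 set \<Rightarrow> 'n::ab_group_add set \<Rightarrow> ('a \<Rightarrow> 'n \<Rightarrow> 'n)
    \<Rightarrow> ('a \<Rightarrow> 'n \<Rightarrow> 'k::ab_group_add) \<Rightarrow> bool" where
  "balanced_map B CN lN \<psi> \<longleftrightarrow>
     (\<forall>x y. \<forall>n\<in>CN. \<psi> (x + y) n = \<psi> x n + \<psi> y n) \<and>
     (\<forall>x. \<forall>n\<in>CN. \<forall>n'\<in>CN. \<psi> x (n + n') = \<psi> x n + \<psi> x n') \<and>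
     (\<forall>x. \<forall>b\<in>B. \<forall>n\<in>CN. \<psi> (x * b) n = \<psi> x (lN b n))"

lemma balanced_map_tensor_rels:
  assumes "balanced_map B CN lN \<psi>" "c \<in> tensor_rels B CN lN"
  shows "tensor_ind \<psi> c = 0"
  using assms(2)
  by induction (use assms(1) in \<open>auto simp: balanced_map_def tensor_ind_add tensor_ind_minus tensor_ind_diff\<close>)

text \<open>The map \<open>x \<otimes> n \<mapsto> \<psi> x n\<close> on a tensor product presented by \<open>\<phi>\<close>, evaluated on an
  arbitrary representative; it is well defined when \<open>\<psi>\<close> is balanced.\<close>
definition tensor_lift :: "('a \<Rightarrow> 'n \<Rightarrow> 'm::ab_group_add) \<Rightarrow> 'n set \<Rightarrow> ('a \<Rightarrow> 'n \<Rightarrow> 'k::ab_group_add)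
    \<Rightarrow> 'm \<Rightarrow> 'k" where
  "tensor_lift \<phi> CN \<psi> m =
     tensor_ind \<psi> (SOME c. Poly_Mapping.keys c \<subseteq> UNIV \<times> CN \<and> tensor_ind \<phi> c = m)"

lemma tensor_lift_tensor_ind:
  fixes \<phi> :: "'a::ring_1 \<Rightarrow> 'n::ab_group_add \<Rightarrow> 'm::ab_group_add"
  assumes kernel: "\<forall>c. Poly_Mapping.keys c \<subseteq> UNIV \<times> CN \<and> tensor_ind \<phi> c = 0
      \<longrightarrow> c \<in> tensor_rels B CN lN"
    and "balanced_map B CN lN \<psi>" and c: "Poly_Mapping.keys c \<subseteq> UNIV \<times> CN"
  shows "tensor_lift \<phi> CN \<psi> (tensor_ind \<phi> c) = tensor_ind \<psi> c"
proof -
  define c' where "c' = (SOME c'. Poly_Mapping.keys c' \<subseteq> UNIV \<times> CN \<and> tensor_ind \<phi> c' = tensor_ind \<phi> c)"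
  have c': "Poly_Mapping.keys c' \<subseteq> UNIV \<times> CN \<and> tensor_ind \<phi> c' = tensor_ind \<phi> c"
    unfolding c'_def by (rule someI) (use c in blast)
  have "Poly_Mapping.keys (c - c') \<subseteq> UNIV \<times> CN"
    using c c' keys_diff[of c c'] by blast
  with kernel c' have "c - c' \<in> tensor_rels B CN lN"
    by (simp add: tensor_ind_diff)
  then have "tensor_ind \<psi> (c - c') = 0"
    by (rule balanced_map_tensor_rels[OF assms(2)])
  then show ?thesis
    unfolding tensor_lift_def c'_def[symmetric] by (simp add: tensor_ind_diff)
qed

locale trivial_ext_decomp =
  fixes B S :: "'a::ring_1 set"
  assumes subring: "subring_of B"
    and S_subgroup: "add_subgroup S"
    and B_S_closed: "\<forall>b\<in>B. \<forall>s\<in>S. b * s \<in> S \<and> s * b \<in> S"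
    and S_square_zero: "\<forall>s\<in>S. \<forall>t\<in>S. s * t = 0"
    and B_inter_S: "B \<inter> S = {0}"
    and B_plus_S: "\<forall>a. \<exists>b\<in>B. \<exists>s\<in>S. a = b + s"
begin

definition proj :: "'a \<Rightarrow> 'a" where
  "proj a = (SOME b. b \<in> B \<and> a - b \<in> S)"

lemma proj_mem: "proj a \<in> B" and diff_proj_mem: "a - proj a \<in> S"
proof -
  obtain b s where "b \<in> B" "s \<in> S" "a = b + s" using B_plus_S by blast
  then have "\<exists>b. b \<in> B \<and> a - b \<in> S" by auto
  then have "proj a \<in> B \<and> a - proj a \<in> S" unfolding proj_def by (rule someI_ex)
  then show "proj a \<in> B" "a - proj a \<in> S" by auto
qed

lemma proj_unique:
  assumes "b \<in> B" "a - b \<in> S"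
  shows "proj a = b"
proof -
  have "b - proj a \<in> B"
    using assms(1) proj_mem subring unfolding subring_of_def by (metis diff_conv_add_uminus)
  moreover have "b - proj a = (a - proj a) - (a - b)" by simp
  then have "b - proj a \<in> S"
    using assms(2) diff_proj_mem add_subgroup_diff[OF S_subgroup] by metis
  ultimately have "b - proj a = 0" using B_inter_S by blast
  then show ?thesis by simp
qed

lemma proj_B: "b \<in> B \<Longrightarrow> proj b = b"
  using proj_unique[of b b] S_subgroup by (simp add: add_subgroup_def)

lemma proj_one [simp]: "proj 1 = 1"
  using proj_B subring by (simp add: subring_of_def)

lemma proj_add: "proj (x + y) = proj x + proj y"
proof (rule proj_unique)
  show "proj x + proj y \<in> B" using proj_mem subring by (simp add: subring_of_def)
  have "x + y - (proj x + proj y) = (x - proj x) + (y - proj y)" by simp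
  then show "x + y - (proj x + proj y) \<in> S"
    using diff_proj_mem[of x] diff_proj_mem[of y] S_subgroup unfolding add_subgroup_def by metis
qed

lemma S_mult_proj: "s \<in> S \<Longrightarrow> s * proj x = s * x"
  using S_square_zero diff_proj_mem[of x] by (metis right_diff_distrib eq_iff_diff_eq_0)

text \<open>\<open>S\<close> is an ideal of \<open>A\<close> with \<open>S\<^sup>2 = 0\<close>, so the projection \<open>A \<rightarrow> B\<close> is multiplicative.\<close>
lemma proj_mult: "proj (x * y) = proj x * proj y"
proof (rule proj_unique)
  show "proj x * proj y \<in> B" using proj_mem subring by (simp add: subring_of_def)
  have "(x - proj x) * y = (x - proj x) * proj y"
    using S_mult_proj[OF diff_proj_mem] by simp
  then have "(x - proj x) * y \<in> S" and "proj x * (y - proj y) \<in> S"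
    using B_S_closed proj_mem diff_proj_mem by auto
  moreover have "x * y - proj x * proj y = (x - proj x) * y + proj x * (y - proj y)"
    by (simp add: algebra_simps)
  ultimately show "x * y - proj x * proj y \<in> S"
    using S_subgroup by (simp add: add_subgroup_def)
qed

end

lemma morita_module_represents:
  "morita_module R R' C l r \<Longrightarrow> llin R C l C l f \<Longrightarrow> \<exists>a'\<in>R'. \<forall>x\<in>C. f x = r x a'"
  unfolding morita_module_def by blast

lemma morita_module_faithful:
  assumes M: "morita_module R R' C l r" and "0 \<in> R'" "a' \<in> R'" "\<forall>x\<in>C. r x a' = 0"
  shows "a' = 0"
proof -
  have "l a 0 = 0" if "a \<in> R" for a
    using M that unfolding morita_module_def bimod_def lmod_def add_subgroup_def
    by (metis add_cancel_right_right add_0)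
  then have "llin R C l C l (\<lambda>_. 0)"
    using M unfolding morita_module_def bimod_def lmod_def llin_def add_subgroup_def by auto
  then have "\<exists>!a'. a' \<in> R' \<and> (\<forall>x\<in>C. 0 = r x a')"
    using M unfolding morita_module_def by blast
  moreover have "\<forall>x\<in>C. r x 0 = 0"
    using M \<open>0 \<in> R'\<close> unfolding morita_module_def bimod_def rmod_def
    by (metis add_cancel_right_right add_0)
  ultimately show ?thesis using assms(3,4) \<open>0 \<in> R'\<close> by (metis (no_types, lifting))
qed

locale morita_trivial_ext = trivial_ext_decomp B S
  for B S :: "'a::ring_1 set" +
  fixes B' :: "'c::ring_1 set"
    and CM :: "'m::ab_group_add set" and lM :: "'a \<Rightarrow> 'm \<Rightarrow> 'm" and rM :: "'m \<Rightarrow> 'c \<Rightarrow> 'm"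
    and CN :: "'n::ab_group_add set" and lN :: "'a \<Rightarrow> 'n \<Rightarrow> 'n" and rN :: "'n \<Rightarrow> 'c \<Rightarrow> 'n"
    and \<phi> :: "'a \<Rightarrow> 'n \<Rightarrow> 'm"
  assumes subring': "subring_of B'"
    and M_morita: "morita_module (UNIV :: 'a set) (UNIV :: 'c set) CM lM rM"
    and N_morita: "morita_module B B' CN lN rN"
    and phi_closed: "\<forall>x. \<forall>n\<in>CN. \<phi> x n \<in> CM"
    and phi_balanced: "balanced_map B CN lN \<phi>"
    and phi_left: "\<forall>a x. \<forall>n\<in>CN. \<phi> (a * x) n = lM a (\<phi> x n)"
    and phi_right: "\<forall>x. \<forall>n\<in>CN. \<forall>b'\<in>B'. \<phi> x (rN n b') = rM (\<phi> x n) b'"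
    and phi_generates: "\<forall>m\<in>CM. \<exists>c. Poly_Mapping.keys c \<subseteq> UNIV \<times> CN \<and> tensor_ind \<phi> c = m"
    and phi_kernel: "\<forall>c. Poly_Mapping.keys c \<subseteq> UNIV \<times> CN \<and> tensor_ind \<phi> c = 0
       \<longrightarrow> c \<in> tensor_rels B CN lN"
begin

lemma CM_subgroup: "add_subgroup CM"
  and lM_closed [simp]: "m \<in> CM \<Longrightarrow> lM a m \<in> CM"
  and lM_add: "m \<in> CM \<Longrightarrow> m' \<in> CM \<Longrightarrow> lM a (m + m') = lM a m + lM a m'"
  and lM_add_left: "m \<in> CM \<Longrightarrow> lM (a + a2) m = lM a m + lM a2 m"
  and rM_closed [simp]: "m \<in> CM \<Longrightarrow> rM m a' \<in> CM"
  and rM_add: "m \<in> CM \<Longrightarrow> m' \<in> CM \<Longrightarrow> rM (m + m') a' = rM m a' + rM m' a'"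
  and rM_add_right: "m \<in> CM \<Longrightarrow> rM m (a' + b') = rM m a' + rM m b'"
  and rM_mult: "m \<in> CM \<Longrightarrow> rM m (a' * b') = rM (rM m a') b'"
  and lM_rM_commute: "m \<in> CM \<Longrightarrow> lM a (rM m a') = rM (lM a m) a'"
  using M_morita unfolding morita_module_def bimod_def lmod_def rmod_def by auto

lemma CN_subgroup: "add_subgroup CN"
  and lN_closed [simp]: "b \<in> B \<Longrightarrow> n \<in> CN \<Longrightarrow> lN b n \<in> CN"
  and lN_add: "b \<in> B \<Longrightarrow> n \<in> CN \<Longrightarrow> n' \<in> CN \<Longrightarrow> lN b (n + n') = lN b n + lN b n'"
  and lN_add_left: "b \<in> B \<Longrightarrow> b2 \<in> B \<Longrightarrow> n \<in> CN \<Longrightarrow> lN (b + b2) n = lN b n + lN b2 n"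
  and lN_mult: "b \<in> B \<Longrightarrow> b2 \<in> B \<Longrightarrow> n \<in> CN \<Longrightarrow> lN (b * b2) n = lN b (lN b2 n)"
  and lN_one [simp]: "n \<in> CN \<Longrightarrow> lN 1 n = n"
  and rN_closed [simp]: "b' \<in> B' \<Longrightarrow> n \<in> CN \<Longrightarrow> rN n b' \<in> CN"
  and rN_add: "b' \<in> B' \<Longrightarrow> n \<in> CN \<Longrightarrow> n' \<in> CN \<Longrightarrow> rN (n + n') b' = rN n b' + rN n' b'"
  and lN_rN_commute: "b \<in> B \<Longrightarrow> b' \<in> B' \<Longrightarrow> n \<in> CN \<Longrightarrow> lN b (rN n b') = rN (lN b n) b'"
  using N_morita unfolding morita_module_def bimod_def lmod_def rmod_def by auto

lemma phi_mem [simp]: "n \<in> CN \<Longrightarrow> \<phi> x n \<in> CM"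
  using phi_closed by blast

lemma phi_add: "n \<in> CN \<Longrightarrow> n' \<in> CN \<Longrightarrow> \<phi> x (n + n') = \<phi> x n + \<phi> x n'"
  using phi_balanced unfolding balanced_map_def by blast

lemma phi_lN: "b \<in> B \<Longrightarrow> n \<in> CN \<Longrightarrow> \<phi> x (lN b n) = \<phi> (x * b) n"
  using phi_balanced unfolding balanced_map_def by simp

lemma additive_ext:
  assumes "additive_on CM f" "additive_on CM g" "\<And>x n. n \<in> CN \<Longrightarrow> f (\<phi> x n) = g (\<phi> x n)"
    and "m \<in> CM"
  shows "f m = g m"
proof -
  obtain c where c: "Poly_Mapping.keys c \<subseteq> UNIV \<times> CN" "tensor_ind \<phi> c = m"
    using phi_generates \<open>m \<in> CM\<close> by blast
  have "f (tensor_ind \<phi> c) = g (tensor_ind \<phi> c)"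
    by (rule tensor_ind_additive_ext[OF CM_subgroup assms(1,2) c(1)]) (simp add: assms(3))
  then show ?thesis using c(2) by simp
qed

text \<open>\<open>proj \<otimes> id : A \<otimes>\<^sub>B N \<rightarrow> B \<otimes>\<^sub>B N \<cong> N\<close>; its kernel is \<open>S \<otimes>\<^sub>B N\<close>.\<close>
definition proj_N :: "'m \<Rightarrow> 'n" where
  "proj_N = tensor_lift \<phi> CN (\<lambda>x n. lN (proj x) n)"

lemma proj_balanced: "balanced_map B CN lN (\<lambda>x n. lN (proj x) n)"
  unfolding balanced_map_def
  by (simp add: proj_add proj_mult proj_B proj_mem lN_add lN_add_left lN_mult)

lemma proj_N_tensor_ind:
  "Poly_Mapping.keys c \<subseteq> UNIV \<times> CN \<Longrightarrow>
    proj_N (tensor_ind \<phi> c) = tensor_ind (\<lambda>x n. lN (proj x) n) c"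
  unfolding proj_N_def by (rule tensor_lift_tensor_ind[OF phi_kernel proj_balanced])

lemma proj_N_phi [simp]: "n \<in> CN \<Longrightarrow> proj_N (\<phi> x n) = lN (proj x) n"
  using proj_N_tensor_ind[of "frag_of (x, n)"] by simp

lemma proj_N_closed [simp]: "m \<in> CM \<Longrightarrow> proj_N m \<in> CN"
proof -
  assume "m \<in> CM"
  then obtain c where c: "Poly_Mapping.keys c \<subseteq> UNIV \<times> CN" "tensor_ind \<phi> c = m"
    using phi_generates by blast
  have "tensor_ind (\<lambda>x n. lN (proj x) n) c \<in> CN"
    by (rule tensor_ind_closed[OF CN_subgroup c(1)]) (auto simp: proj_mem)
  then show ?thesis using proj_N_tensor_ind[OF c(1)] c(2) by simp
qed

lemma proj_N_add: "m \<in> CM \<Longrightarrow> m' \<in> CM \<Longrightarrow> proj_N (m + m') = proj_N m + proj_N m'"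
proof -
  assume "m \<in> CM" "m' \<in> CM"
  then obtain c c' where c: "Poly_Mapping.keys c \<subseteq> UNIV \<times> CN" "tensor_ind \<phi> c = m"
    and c': "Poly_Mapping.keys c' \<subseteq> UNIV \<times> CN" "tensor_ind \<phi> c' = m'"
    using phi_generates by meson
  have "Poly_Mapping.keys (c + c') \<subseteq> UNIV \<times> CN"
    using c(1) c'(1) keys_add[of c c'] by blast
  then show ?thesis
    using proj_N_tensor_ind c c' by (metis tensor_ind_add)
qed

lemma lM_phi [simp]: "n \<in> CN \<Longrightarrow> lM a (\<phi> x n) = \<phi> (a * x) n"
  using phi_left by simp

lemma rM_phi [simp]: "b' \<in> B' \<Longrightarrow> n \<in> CN \<Longrightarrow> rM (\<phi> x n) b' = \<phi> x (rN n b')"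
  using phi_right by simp

lemma rM_zero [simp]: "rM 0 a' = 0"
  using additive_on_zero[OF CM_subgroup, of "\<lambda>m. rM m a'"] by (simp add: additive_on_def rM_add)

lemma phi_zero [simp]: "\<phi> x 0 = 0"
  using additive_on_zero[OF CN_subgroup, of "\<phi> x"] by (simp add: additive_on_def phi_add)

lemma proj_N_zero [simp]: "proj_N 0 = 0"
  using additive_on_zero[OF CM_subgroup, of proj_N] by (simp add: additive_on_def proj_N_add)

lemma lN_zero [simp]: "b \<in> B \<Longrightarrow> lN b 0 = 0"
  using additive_on_zero[OF CN_subgroup, of "lN b"] by (simp add: additive_on_def lN_add)

lemma rN_zero [simp]: "b' \<in> B' \<Longrightarrow> rN 0 b' = 0"
  using additive_on_zero[OF CN_subgroup, of "\<lambda>n. rN n b'"] by (simp add: additive_on_def rN_add)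

lemma rM_diff_right: "m \<in> CM \<Longrightarrow> rM m (a' - b') = rM m a' - rM m b'"
  using additive_on_diff[of UNIV "rM m" a' b'] by (simp add: add_subgroup_def additive_on_def rM_add_right)

lemma rM_zero_right [simp]: "m \<in> CM \<Longrightarrow> rM m 0 = 0"
  using rM_diff_right[of m 0 0] by simp

lemma proj_N_diff: "m \<in> CM \<Longrightarrow> m' \<in> CM \<Longrightarrow> proj_N (m - m') = proj_N m - proj_N m'"
  using additive_on_diff[OF CM_subgroup, of proj_N] by (simp add: additive_on_def proj_N_add)

lemma proj_N_lM: "m \<in> CM \<Longrightarrow> proj_N (lM x m) = lN (proj x) (proj_N m)"
  by (rule additive_ext[where f = "\<lambda>m. proj_N (lM x m)" and g = "\<lambda>m. lN (proj x) (proj_N m)"])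
    (auto simp: additive_on_def lM_add proj_N_add lN_add proj_mem proj_mult lN_mult)

lemma proj_N_rM: "b' \<in> B' \<Longrightarrow> m \<in> CM \<Longrightarrow> proj_N (rM m b') = rN (proj_N m) b'"
  by (rule additive_ext[where f = "\<lambda>m. proj_N (rM m b')" and g = "\<lambda>m. rN (proj_N m) b'"])
    (auto simp: additive_on_def rM_add proj_N_add rN_add proj_mem lN_rN_commute)

lemma lM_S_eq_proj_N: "s \<in> S \<Longrightarrow> m \<in> CM \<Longrightarrow> lM s m = lM s (\<phi> 1 (proj_N m))"
  by (rule additive_ext[where f = "lM s" and g = "\<lambda>m. lM s (\<phi> 1 (proj_N m))"])
    (auto simp: additive_on_def lM_add proj_N_add phi_add proj_mem phi_lN S_mult_proj)

lemma lM_S_kernel: "s \<in> S \<Longrightarrow> m \<in> CM \<Longrightarrow> proj_N m = 0 \<Longrightarrow> lM s m = 0"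
  using lM_S_eq_proj_N by simp

definition S' :: "'c set" where
  "S' = {a'. \<forall>m\<in>CM. proj_N (rM m a') = 0}"

lemma S'_memI:
  assumes "\<And>n. n \<in> CN \<Longrightarrow> proj_N (rM (\<phi> 1 n) a') = 0"
  shows "a' \<in> S'"
  unfolding S'_def
proof (intro CollectI ballI)
  fix m assume "m \<in> CM"
  show "proj_N (rM m a') = 0"
  proof (rule additive_ext[where g = "\<lambda>_. 0", OF _ _ _ \<open>m \<in> CM\<close>])
    fix x n assume n: "n \<in> CN"
    have "proj_N (rM (\<phi> x n) a') = proj_N (lM x (rM (\<phi> 1 n) a'))"
      using n by (simp add: lM_rM_commute)
    also have "\<dots> = 0"
      using n assms by (simp add: proj_N_lM proj_mem)
    finally show "proj_N (rM (\<phi> x n) a') = 0" .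
  qed (simp_all add: additive_on_def rM_add proj_N_add)
qed

text \<open>Elements of \<open>S'\<close> act on \<open>M \<cong> (B \<otimes> N) \<oplus> (S \<otimes> N)\<close> only through the first summand.\<close>
lemma rM_S'_eq_proj_N:
  assumes t: "t \<in> S'" and "m \<in> CM"
  shows "rM m t = rM (\<phi> 1 (proj_N m)) t"
proof (rule additive_ext[where f = "\<lambda>m. rM m t", OF _ _ _ \<open>m \<in> CM\<close>])
  fix x n assume n: "n \<in> CN"
  let ?m = "rM (\<phi> 1 n) t"
  have "proj_N ?m = 0" using t n unfolding S'_def by simp
  then have "lM (x - proj x) ?m = 0"
    using n by (simp add: lM_S_kernel diff_proj_mem)
  then have "lM x ?m = lM (proj x) ?m"
    using lM_add_left[of ?m "proj x" "x - proj x"] n by simp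
  then have "rM (\<phi> x n) t = rM (\<phi> (proj x) n) t"
    using n lM_rM_commute[of "\<phi> 1 n" _ t] by simp
  also have "\<dots> = rM (\<phi> 1 (proj_N (\<phi> x n))) t"
    using n by (simp add: phi_lN proj_mem)
  finally show "rM (\<phi> x n) t = rM (\<phi> 1 (proj_N (\<phi> x n))) t" .
qed (simp_all add: additive_on_def rM_add proj_N_add phi_add)

lemma S'_subgroup: "add_subgroup S'"
  unfolding add_subgroup_def S'_def
proof (intro conjI ballI CollectI)
  fix x m assume "x \<in> {a'. \<forall>m\<in>CM. proj_N (rM m a') = 0}" "m \<in> CM"
  then show "proj_N (rM m (- x)) = 0"
    using rM_diff_right[of m 0 x] proj_N_diff[of 0 "rM m x"] CM_subgroup
    unfolding add_subgroup_def by simp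
qed (auto simp: rM_add_right proj_N_add)

lemma B'_S'_closed: "\<forall>b\<in>B'. \<forall>s\<in>S'. b * s \<in> S' \<and> s * b \<in> S'"
  unfolding S'_def by (simp add: rM_mult proj_N_rM)

lemma S'_square_zero: "\<forall>s\<in>S'. \<forall>t\<in>S'. s * t = 0"
proof (intro ballI)
  fix s t assume s: "s \<in> S'" and t: "t \<in> S'"
  have "rM m (s * t) = 0" if "m \<in> CM" for m
  proof -
    have "rM m (s * t) = rM (\<phi> 1 (proj_N (rM m s))) t"
      using that rM_S'_eq_proj_N[OF t, of "rM m s"] by (simp add: rM_mult)
    also have "\<dots> = 0" using s that unfolding S'_def by simp
    finally show ?thesis .
  qed
  then show "s * t = 0" using morita_module_faithful[OF M_morita] by blast
qed

lemma B'_inter_S': "B' \<inter> S' = {0}"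
proof -
  have B'0: "0 \<in> B'" using subring' by (simp add: subring_of_def)
  have "b = 0" if b: "b \<in> B'" "b \<in> S'" for b
  proof (rule morita_module_faithful[OF N_morita B'0 b(1)], intro ballI)
    fix n assume n: "n \<in> CN"
    have "proj_N (rM (\<phi> 1 n) b) = 0"
      using b(2) phi_mem[OF n] unfolding S'_def by blast
    with b n show "rN n b = 0" by simp
  qed
  then show ?thesis using B'0 S'_subgroup by (auto simp: add_subgroup_def)
qed

lemma B'_plus_S': "\<exists>b'\<in>B'. \<exists>s'\<in>S'. a = b' + s'"
proof -
  define h where "h n = proj_N (rM (\<phi> 1 n) a)" for n
  have "llin B CN lN CN lN h"
    unfolding llin_def h_def
  proof (intro conjI ballI)
    fix b n assume b: "b \<in> B" and n: "n \<in> CN"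
    have "proj_N (rM (\<phi> 1 (lN b n)) a) = proj_N (lM b (rM (\<phi> 1 n) a))"
      using b n lM_rM_commute[of "\<phi> 1 n" b a] by (simp add: phi_lN)
    also have "\<dots> = lN b (proj_N (rM (\<phi> 1 n) a))"
      using b n by (simp add: proj_N_lM proj_B)
    finally show "proj_N (rM (\<phi> 1 (lN b n)) a) = lN b (proj_N (rM (\<phi> 1 n) a))" .
  qed (simp_all add: phi_add rM_add proj_N_add)
  then obtain b' where b': "b' \<in> B'" "\<forall>n\<in>CN. h n = rN n b'"
    using morita_module_represents[OF N_morita] by blast
  have "a - b' \<in> S'"
  proof (rule S'_memI)
    fix n assume "n \<in> CN"
    then show "proj_N (rM (\<phi> 1 n) (a - b')) = 0"
      using b' by (simp add: rM_diff_right proj_N_diff h_def)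
  qed
  then show ?thesis using b' by force
qed

theorem trivial_ext_B': "trivial_ext B'"
  unfolding trivial_ext_def
  using subring' S'_subgroup B'_S'_closed S'_square_zero B'_inter_S' B'_plus_S' by blast

end

theorem proposition3p1:
  fixes B :: "'a::ring_1 set" and B' :: "'c::ring_1 set"
    and CM :: "'m::ab_group_add set" and lM :: "'a \<Rightarrow> 'm \<Rightarrow> 'm" and rM :: "'m \<Rightarrow> 'c \<Rightarrow> 'm"
    and CN :: "'n::ab_group_add set" and lN :: "'a \<Rightarrow> 'n \<Rightarrow> 'n" and rN :: "'n \<Rightarrow> 'c \<Rightarrow> 'n"
  assumes "trivial_ext B"
    and "morita_equiv_via B B' CM lM rM CN lN rN"
  shows "trivial_ext B'"
proof -
  obtain S where S: "trivial_ext_decomp B S"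
    using assms(1) unfolding trivial_ext_def trivial_ext_decomp_def by blast
  have "\<exists>\<phi>. morita_trivial_ext B S B' CM lM rM CN lN rN \<phi>"
    using S assms(2)
    unfolding morita_equiv_via_def tensor_iso_def balanced_map_def
      morita_trivial_ext_def morita_trivial_ext_axioms_def
    by (elim conjE exE) (intro exI conjI; assumption)
  then show ?thesis using morita_trivial_ext.trivial_ext_B' by blast
qed

end
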